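(* Let $\mathcal{H}_A,\mathcal{H}_B$ be finite-dimensional Hilbert spaces with fixed reference bases $\{|i\rangle_A\}$, $\{|m\rangle_B\}$, and product basis on $\mathcal{H}_A\otimes\mathcal{H}_B$. For every state $\rho_{AB}$ with reduced state $\rho_B$, $$C_{l_1}(\rho_{AB})\geq C^{A|B}_{l_1}(\rho_{AB})+C_{l_1}(\rho_B).$$
   Context: For a state $\rho$ on a space with reference basis $\{|k\rangle\}$, $C_{l_1}(\rho)=\sum_{k\neq l}|\langle k|\rho|l\rangle|$ (for $\rho_{AB}$ the product basis is used). Writing $\rho_{AB}=\sum_{i,j}|i\rangle\langle j|_A\otimes\rho^B_{ij}$ with $\rho^B_{ij}=\langle i|\rho_{AB}|j\rangle_A$ operators on $\mathcal{H}_B$, the $l_1$ norm of IQ coherence is $C^{A|B}_{l_1}(\rho_{AB})=\sum_{i\neq j}\|\rho^B_{ij}\|_{\mathrm{tr}}$, where $\|X\|_{\mathrm{tr}}=\mathrm{Tr}\sqrt{X^\dagger X}$. *)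

theory Defs
  imports Complex_Main "Jordan_Normal_Form.Matrix"
begin

text \<open>Matrices are complex matrices w.r.t. the fixed reference bases.
  The product basis vector |i>_A |m>_B of H_A (x) H_B (dims dA, dB) has index i * dB + m.\<close>

definition ctrace :: "complex mat \<Rightarrow> complex" where
  "ctrace X = (\<Sum>k<dim_row X. X $$ (k, k))"

definition cadj :: "complex mat \<Rightarrow> complex mat" where
  "cadj X = mat (dim_col X) (dim_row X) (\<lambda>(i, j). cnj (X $$ (j, i)))"

definition psd_mat :: "nat \<Rightarrow> complex mat \<Rightarrow> bool" where
  "psd_mat n S \<longleftrightarrow> S \<in> carrier_mat n n \<and> cadj S = S \<and>
     (\<forall>v \<in> carrier_vec n. 0 \<le> Re (conjugate v \<bullet> (S *\<^sub>v v)))"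

definition density_mat :: "nat \<Rightarrow> complex mat \<Rightarrow> bool" where
  "density_mat n \<rho> \<longleftrightarrow> psd_mat n \<rho> \<and> ctrace \<rho> = 1"

definition msqrt :: "complex mat \<Rightarrow> complex mat" where
  "msqrt P = (THE S. psd_mat (dim_row P) S \<and> S * S = P)"

definition trace_norm :: "complex mat \<Rightarrow> real" where
  "trace_norm X = Re (ctrace (msqrt (cadj X * X)))"

definition C_l1 :: "complex mat \<Rightarrow> real" where
  "C_l1 \<rho> = (\<Sum>k<dim_row \<rho>. \<Sum>l<dim_row \<rho>. if k \<noteq> l then cmod (\<rho> $$ (k, l)) else 0)"

text \<open>Block rho^B_ij = <i|rho_AB|j>_A, an operator on H_B.\<close>
definition block_B :: "nat \<Rightarrow> complex mat \<Rightarrow> nat \<Rightarrow> nat \<Rightarrow> complex mat" where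
  "block_B dB \<rho> i j = mat dB dB (\<lambda>(m, n). \<rho> $$ (i * dB + m, j * dB + n))"

definition ptrace_A :: "nat \<Rightarrow> nat \<Rightarrow> complex mat \<Rightarrow> complex mat" where
  "ptrace_A dA dB \<rho> = mat dB dB (\<lambda>(m, n). \<Sum>i<dA. \<rho> $$ (i * dB + m, i * dB + n))"

definition C_l1_IQ :: "nat \<Rightarrow> nat \<Rightarrow> complex mat \<Rightarrow> real" where
  "C_l1_IQ dA dB \<rho> = (\<Sum>i<dA. \<Sum>j<dA. if i \<noteq> j then trace_norm (block_B dB \<rho> i j) else 0)"

end

(*
  The off-diagonal entries of \<rho> are those of the
  off-diagonal blocks \<rho>^B_ij (i \<noteq> j) together with the off-diagonal entries of the diagonal
  blocks \<rho>^B_ii. Since \<rho>_B = \<Sum>_i \<rho>^B_ii, the triangle inequality bounds C_l1(\<rho>_B) by the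
  latter. The former bound C^{A|B}_l1(\<rho>), because the trace norm of a square matrix X is at most
  the sum of the moduli of its entries: if V diagonalises the positive root of X^* X, the columns
  of X V are orthogonal and their norms s_k are the eigenvalues of that root, and
  \<Sum>_k s_k = Re \<Sum>_{m,j} X_mj c_mj where every c_mj is an inner product of two vectors of norm
  at most 1. The positive root exists and is unique by the spectral theorem for Hermitian
  matrices, proved by splitting off one eigenvector at a time.
*)
theory Submission
  imports Defs "Jordan_Normal_Form.Schur_Decomposition"
begin

lemma cadj_dim [simp]: "dim_row (cadj X) = dim_col X" "dim_col (cadj X) = dim_row X"
  by (auto simp: cadj_def)

lemma cadj_index [simp]: "i < dim_col X \<Longrightarrow> j < dim_row X \<Longrightarrow> cadj X $$ (i, j) = cnj (X $$ (j, i))"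
  by (auto simp: cadj_def)

lemma cadj_carrier_mat [simp]: "X \<in> carrier_mat n m \<Longrightarrow> cadj X \<in> carrier_mat m n"
  by auto

lemma cadj_cadj [simp]: "cadj (cadj X) = X"
  by (rule eq_matI) auto

lemma index_mult_mat_sum:
  assumes "A \<in> carrier_mat n m" "B \<in> carrier_mat m p" "i < n" "j < p"
  shows "(A * B) $$ (i, j) = (\<Sum>k<m. A $$ (i, k) * B $$ (k, j))"
  using assms by (auto simp: scalar_prod_def lessThan_atLeast0)

lemma cadj_mult:
  assumes "A \<in> carrier_mat n m" "B \<in> carrier_mat m p"
  shows "cadj (A * B) = cadj B * cadj A"
proof (rule eq_matI)
  fix i j assume "i < dim_row (cadj B * cadj A)" "j < dim_col (cadj B * cadj A)"
  then have i: "i < p" and j: "j < n" using assms by auto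
  have "cadj (A * B) $$ (i, j) = (\<Sum>k<m. cnj (A $$ (j, k)) * cnj (B $$ (k, i)))"
    using assms i j by (simp add: index_mult_mat_sum[OF assms j i])
  also have "\<dots> = (cadj B * cadj A) $$ (i, j)"
    by (subst index_mult_mat_sum[of _ p m _ n])
      (use assms i j in \<open>auto simp: mult.commute intro!: sum.cong\<close>)
  finally show "cadj (A * B) $$ (i, j) = (cadj B * cadj A) $$ (i, j)" .
qed (use assms in auto)

lemma cadj_four_block_mat:
  assumes "A \<in> carrier_mat n1 m1" "B \<in> carrier_mat n1 m2" "C \<in> carrier_mat n2 m1" "D \<in> carrier_mat n2 m2"
  shows "cadj (four_block_mat A B C D) = four_block_mat (cadj A) (cadj C) (cadj B) (cadj D)"
  by (rule eq_matI) (use assms in auto)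

lemma cnj_mult_self: "cnj z * z = complex_of_real ((cmod z)\<^sup>2)"
  using complex_norm_square by (metis mult.commute)

lemma mult_cnj_self: "z * cnj z = complex_of_real ((cmod z)\<^sup>2)"
  using complex_norm_square by metis

lemma cscalar_prod_self:
  assumes "w \<in> carrier_vec n"
  shows "w \<bullet>c w = complex_of_real (\<Sum>k<n. (cmod (w $ k))\<^sup>2)"
  using assms by (auto simp: scalar_prod_def lessThan_atLeast0 mult_cnj_self)

lemma square_mult_carrier_mat [simp]: "A \<in> carrier_mat n n \<Longrightarrow> B \<in> carrier_mat n n \<Longrightarrow> A * B \<in> carrier_mat n n"
  by simp

definition unitary_mat :: "nat \<Rightarrow> complex mat \<Rightarrow> bool" where
  "unitary_mat n U \<longleftrightarrow> U \<in> carrier_mat n n \<and> cadj U * U = 1\<^sub>m n"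

lemma unitary_matD:
  assumes "unitary_mat n U"
  shows "U \<in> carrier_mat n n" "cadj U * U = 1\<^sub>m n" "U * cadj U = 1\<^sub>m n"
  using assms mat_mult_left_right_inverse[of "cadj U" n U] by (auto simp: unitary_mat_def)

lemma unitary_mat_cancel:
  assumes "unitary_mat n U" "X \<in> carrier_mat n m"
  shows "cadj U * (U * X) = X" "U * (cadj U * X) = X"
  using assms unitary_matD[OF assms(1)] assoc_mult_mat[of "cadj U" n n U n X m]
    assoc_mult_mat[of U n n "cadj U" n X m] by auto

lemma unitary_mat_mult:
  assumes "unitary_mat n U" "unitary_mat n W"
  shows "unitary_mat n (U * W)"
  using unitary_matD[OF assms(1)] unitary_matD[OF assms(2)] unitary_mat_cancel[OF assms(1), of W n]
  by (simp add: unitary_mat_def cadj_mult[of _ n n _ n] assoc_mult_mat[of _ n n _ n _ n])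

lemma unitary_mat_four_block:
  assumes "unitary_mat n U"
  shows "unitary_mat (Suc n) (four_block_mat (1\<^sub>m 1) (0\<^sub>m 1 n) (0\<^sub>m n 1) U)"
proof -
  note U = unitary_matD[OF assms]
  have "cadj (four_block_mat (1\<^sub>m 1) (0\<^sub>m 1 n) (0\<^sub>m n 1) U) =
      four_block_mat (1\<^sub>m 1) (0\<^sub>m 1 n) (0\<^sub>m n 1) (cadj U)"
    by (subst cadj_four_block_mat[of _ 1 1 _ n _ n]) (use U in \<open>auto intro!: eq_matI\<close>)
  then show ?thesis
    using U by (auto simp: unitary_mat_def mult_four_block_mat[of _ 1 1 _ n _ n _ _ 1 _ n])
qed

lemma unitary_mat_of_corthogonal:
  assumes ws: "set ws \<subseteq> carrier_vec n" "corthogonal ws" "length ws = n"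
  obtains U where "unitary_mat n U" "\<And>j. j < n \<Longrightarrow> \<exists>c. col U j = c \<cdot>\<^sub>v ws ! j"
proof -
  define nrm where "nrm j = (\<Sum>k<n. (cmod (ws ! j $ k))\<^sup>2)" for j
  have wsj: "ws ! j \<in> carrier_vec n" if "j < n" for j using ws that by auto
  have nrm_eq: "ws ! j \<bullet>c ws ! j = complex_of_real (nrm j)" if "j < n" for j
    using cscalar_prod_self[OF wsj[OF that]] unfolding nrm_def by simp
  have nrm_pos: "nrm j > 0" if "j < n" for j
  proof -
    have "ws ! j \<bullet>c ws ! j \<noteq> 0" using corthogonalD[OF ws(2), of j j] that ws(3) by auto
    then have "nrm j \<noteq> 0" using nrm_eq[OF that] by auto
    moreover have "nrm j \<ge> 0" unfolding nrm_def by (simp add: sum_nonneg)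
    ultimately show ?thesis by auto
  qed
  define U where "U = mat n n (\<lambda>(i, j). ws ! j $ i / complex_of_real (sqrt (nrm j)))"
  have U: "U \<in> carrier_mat n n" unfolding U_def by auto
  have "cadj U * U = 1\<^sub>m n"
  proof (rule eq_matI)
    fix i j assume "i < dim_row (1\<^sub>m n)" "j < dim_col (1\<^sub>m n)"
    then have i: "i < n" and j: "j < n" by auto
    have "(cadj U * U) $$ (i, j) = (\<Sum>k<n. cnj (ws ! i $ k) * ws ! j $ k) /
        (complex_of_real (sqrt (nrm i)) * complex_of_real (sqrt (nrm j)))"
      by (subst index_mult_mat_sum[of _ n n _ n])
        (use U i j in \<open>auto simp: U_def sum_divide_distrib intro!: sum.cong\<close>)
    also have "(\<Sum>k<n. cnj (ws ! i $ k) * ws ! j $ k) = ws ! j \<bullet>c ws ! i"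
      using wsj[OF i] wsj[OF j] by (auto simp: scalar_prod_def lessThan_atLeast0 mult.commute)
    finally have entry: "(cadj U * U) $$ (i, j) = ws ! j \<bullet>c ws ! i /
        (complex_of_real (sqrt (nrm i)) * complex_of_real (sqrt (nrm j)))" .
    show "(cadj U * U) $$ (i, j) = 1\<^sub>m n $$ (i, j)"
    proof (cases "i = j")
      case True
      have "sqrt (nrm j) * sqrt (nrm j) = nrm j" using nrm_pos[OF j] by simp
      then have "complex_of_real (sqrt (nrm j)) * complex_of_real (sqrt (nrm j)) = complex_of_real (nrm j)"
        by (metis of_real_mult)
      then show ?thesis using entry True nrm_eq[OF j] nrm_pos[OF j] i by simp
    qed (use entry corthogonalD[OF ws(2), of j i] i j ws(3) in simp)
  qed (use U in auto)
  moreover have "col U j = (1 / complex_of_real (sqrt (nrm j))) \<cdot>\<^sub>v ws ! j" if j: "j < n" for j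
    by (rule eq_vecI) (use j wsj[OF j] in \<open>auto simp: U_def\<close>)
  ultimately show ?thesis using that U by (auto simp: unitary_mat_def)
qed

lemma unitary_mat_first_col:
  assumes v: "v \<in> carrier_vec (Suc n)" "v \<noteq> 0\<^sub>v (Suc n)"
  obtains U c where "unitary_mat (Suc n) U" "col U 0 = c \<cdot>\<^sub>v v"
proof -
  interpret cof_vec_space "Suc n" "TYPE(complex)" .
  define b where "b = basis_completion v"
  from basis_completion[OF v, folded b_def]
  have b: "distinct b" "\<not> lin_dep (set b)" "set b \<subseteq> carrier_vec (Suc n)"
    "hd b = v" "length b = Suc n" by auto
  then obtain vs where bv: "b = v # vs" by (cases b) auto
  define ws where "ws = gram_schmidt (Suc n) b"
  from gram_schmidt_result[OF b(3,1,2) ws_def]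
  have ws: "set ws \<subseteq> carrier_vec (Suc n)" "corthogonal ws" "length ws = Suc n"
    by (auto simp: b(5))
  have "hd ws = v" using gram_schmidt_hd[OF v(1), of vs] unfolding ws_def bv .
  then have "ws ! 0 = v" using ws(3) by (cases ws) auto
  then show ?thesis using unitary_mat_of_corthogonal[OF ws] that by (metis zero_less_Suc)
qed

definition real_diag :: "nat \<Rightarrow> (nat \<Rightarrow> real) \<Rightarrow> complex mat" where
  "real_diag n d = mat n n (\<lambda>(i, j). if i = j then complex_of_real (d i) else 0)"

lemma real_diag_carrier [simp]: "real_diag n d \<in> carrier_mat n n"
  by (simp add: real_diag_def)

lemma real_diag_dim [simp]: "dim_row (real_diag n d) = n" "dim_col (real_diag n d) = n"
  by (auto simp: real_diag_def)

lemma real_diag_index [simp]: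
  "i < n \<Longrightarrow> j < n \<Longrightarrow> real_diag n d $$ (i, j) = (if i = j then complex_of_real (d i) else 0)"
  by (simp add: real_diag_def)

lemma cadj_real_diag [simp]: "cadj (real_diag n d) = real_diag n d"
  by (rule eq_matI) auto

lemma real_diag_Suc:
  "real_diag (Suc n) d = four_block_mat (mat 1 1 (\<lambda>_. complex_of_real (d 0)))
     (0\<^sub>m 1 n) (0\<^sub>m n 1) (real_diag n (\<lambda>k. d (Suc k)))"
  by (rule eq_matI) (auto simp: four_block_mat_def less_Suc_eq_0_disj)

lemma index_mult_real_diag_right:
  assumes V: "V \<in> carrier_mat m n" and i: "i < m" and k: "k < n"
  shows "(V * real_diag n c) $$ (i, k) = V $$ (i, k) * complex_of_real (c k)"
proof -
  have "(V * real_diag n c) $$ (i, k) = (\<Sum>l<n. V $$ (i, l) * real_diag n c $$ (l, k))"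
    by (rule index_mult_mat_sum[OF V real_diag_carrier i k])
  also have "\<dots> = (\<Sum>l<n. if l = k then V $$ (i, k) * complex_of_real (c k) else 0)"
    by (rule sum.cong) (use k in auto)
  finally show ?thesis using k by simp
qed

lemma index_mult_real_diag_left:
  assumes M: "M \<in> carrier_mat n m" and i: "i < n" and j: "j < m"
  shows "(real_diag n c * M) $$ (i, j) = complex_of_real (c i) * M $$ (i, j)"
proof -
  have "(real_diag n c * M) $$ (i, j) = (\<Sum>l<n. real_diag n c $$ (i, l) * M $$ (l, j))"
    by (rule index_mult_mat_sum[OF real_diag_carrier M i j])
  also have "\<dots> = (\<Sum>l<n. if l = i then complex_of_real (c i) * M $$ (i, j) else 0)"
    by (rule sum.cong) (use i in auto)
  finally show ?thesis using i by simp
qed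

lemma real_diag_mult: "real_diag n a * real_diag n b = real_diag n (\<lambda>k. a k * b k)"
  by (rule eq_matI) (auto simp: index_mult_real_diag_left[OF real_diag_carrier] simp del: index_mult_mat(1))

lemma index_unitary_conj_real_diag:
  assumes V: "V \<in> carrier_mat n n" and i: "i < n" and j: "j < n"
  shows "(V * real_diag n c * cadj V) $$ (i, j) = (\<Sum>k<n. V $$ (i, k) * complex_of_real (c k) * cnj (V $$ (j, k)))"
proof -
  have "V * real_diag n c \<in> carrier_mat n n" using V by simp
  from index_mult_mat_sum[OF this cadj_carrier_mat[OF V] i j] show ?thesis
    using V i j by (simp add: index_mult_real_diag_right[OF V] del: index_mult_mat(1))
qed

lemma cadj_conj:
  assumes U: "U \<in> carrier_mat n m" and A: "A \<in> carrier_mat n n"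
  shows "cadj (cadj U * A * U) = cadj U * cadj A * U"
proof -
  have "cadj U * A \<in> carrier_mat m n" using U A by (metis cadj_carrier_mat mult_carrier_mat)
  then have "cadj (cadj U * A * U) = cadj U * (cadj A * U)"
    using U A by (simp add: cadj_mult[of _ m n U m] cadj_mult[of "cadj U" m n A n])
  then show ?thesis using U A assoc_mult_mat[of "cadj U" m n "cadj A" n U m] by simp
qed

lemma unitary_conj_eqD:
  assumes U: "unitary_mat n U" and A: "A \<in> carrier_mat n n" and eq: "cadj U * A * U = D"
  shows "A = U * D * cadj U"
proof -
  note Uc = unitary_matD[OF U]
  have "U * D * cadj U = (U * cadj U) * A * (U * cadj U)"
    using Uc(1) A by (simp add: eq[symmetric] assoc_mult_mat[of _ n n _ n _ n])
  also have "\<dots> = A" unfolding Uc(3) using A by simp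
  finally show ?thesis by simp
qed

lemma unitary_conj_inverse:
  assumes U: "unitary_mat n U" and D: "D \<in> carrier_mat n n"
  shows "cadj U * (U * D * cadj U) * U = D"
  using unitary_matD[OF U] D
  by (simp add: assoc_mult_mat[of _ n n _ n _ n] unitary_mat_cancel(1)[OF U D])

lemma complex_mat_has_eigenvalue:
  fixes A :: "complex mat"
  assumes A: "A \<in> carrier_mat (Suc n) (Suc n)"
  obtains e where "eigenvalue A e"
proof -
  obtain es where es: "char_poly A = (\<Prod>a\<leftarrow>es. [:- a, 1:])" "length es = Suc n"
    using char_poly_factorized[OF A] by blast
  then obtain e rest where "es = e # rest" by (cases es) auto
  then have "poly (char_poly A) e = 0" unfolding es(1) by simp
  then show ?thesis using that eigenvalue_root_char_poly[OF A] by blast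
qed

lemma unitary_conj_eigen_col:
  assumes A: "A \<in> carrier_mat n n" and U: "unitary_mat n U"
    and ev: "A *\<^sub>v col U 0 = e \<cdot>\<^sub>v col U 0" and i: "i < n"
  shows "(cadj U * A * U) $$ (i, 0) = (if i = 0 then e else 0)"
proof -
  note Uc = unitary_matD[OF U]
  have UA: "cadj U * A \<in> carrier_mat n n" using Uc A by simp
  have n: "0 < n" using i by simp
  have "col (cadj U * A * U) 0 = cadj U *\<^sub>v (A *\<^sub>v col U 0)"
    using Uc A n by (simp add: col_mult2[OF UA Uc(1) n] assoc_mult_mat_vec[of "cadj U" n n A n])
  also have "\<dots> = e \<cdot>\<^sub>v (cadj U *\<^sub>v col U 0)"
    unfolding ev using Uc n by (intro mult_mat_vec[of _ n n]) auto
  also have "cadj U *\<^sub>v col U 0 = col (1\<^sub>m n) 0"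
    using Uc n by (metis col_mult2 cadj_carrier_mat)
  finally have "col (cadj U * A * U) 0 = e \<cdot>\<^sub>v col (1\<^sub>m n) 0" .
  from arg_cong[OF this, of "\<lambda>v. v $ i"] show ?thesis using Uc A i by simp
qed

lemma hermitian_first_col_block:
  assumes A: "A \<in> carrier_mat (Suc n) (Suc n)" "cadj A = A"
    and col0: "\<And>i. i < Suc n \<Longrightarrow> A $$ (i, 0) = (if i = 0 then e else 0)"
  obtains B where "B \<in> carrier_mat n n" "cadj B = B"
    "A = four_block_mat (mat 1 1 (\<lambda>_. complex_of_real (Re e))) (0\<^sub>m 1 n) (0\<^sub>m n 1) B"
proof -
  have adj: "A $$ (i, j) = cnj (A $$ (j, i))" if "i < Suc n" "j < Suc n" for i j
    using arg_cong[OF A(2), of "\<lambda>M. M $$ (i, j)"] A(1) that by simp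
  have row0: "A $$ (0, j) = (if j = 0 then cnj e else 0)" if "j < Suc n" for j
    using adj[of 0 j] col0[OF that] that by simp
  have e: "complex_of_real (Re e) = e"
    using row0[of 0] col0[of 0] by (simp add: complex_eq_iff)
  define B where "B = mat n n (\<lambda>(i, j). A $$ (Suc i, Suc j))"
  have "cadj B = B"
  proof (rule eq_matI)
    fix i j assume "i < dim_row B" "j < dim_col B"
    then show "cadj B $$ (i, j) = B $$ (i, j)"
      using adj[of "Suc i" "Suc j"] by (simp add: B_def)
  qed (simp_all add: B_def)
  moreover have "A = four_block_mat (mat 1 1 (\<lambda>_. complex_of_real (Re e))) (0\<^sub>m 1 n) (0\<^sub>m n 1) B"
  proof (rule eq_matI)
    fix i j assume "i < dim_row (four_block_mat (mat 1 1 (\<lambda>_. complex_of_real (Re e))) (0\<^sub>m 1 n) (0\<^sub>m n 1) B)"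
      "j < dim_col (four_block_mat (mat 1 1 (\<lambda>_. complex_of_real (Re e))) (0\<^sub>m 1 n) (0\<^sub>m n 1) B)"
    then have i: "i < Suc n" and j: "j < Suc n" by (auto simp: B_def)
    show "A $$ (i, j) = four_block_mat (mat 1 1 (\<lambda>_. complex_of_real (Re e))) (0\<^sub>m 1 n) (0\<^sub>m n 1) B $$ (i, j)"
    proof (cases "i = 0 \<or> j = 0")
      case True
      then show ?thesis using col0[OF i] row0[OF j] e i j by (auto simp: B_def)
    next
      case False
      then obtain i' j' where "i = Suc i'" "j = Suc j'" by (cases i; cases j) auto
      then show ?thesis using i j by (auto simp: B_def)
    qed
  qed (use A(1) in \<open>auto simp: B_def\<close>)
  moreover have "B \<in> carrier_mat n n" by (simp add: B_def)
  ultimately show ?thesis using that by blast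
qed

lemma four_block_unitary_conj:
  assumes "U \<in> carrier_mat n n" "B \<in> carrier_mat n n" "E \<in> carrier_mat 1 1"
  shows "cadj (four_block_mat (1\<^sub>m 1) (0\<^sub>m 1 n) (0\<^sub>m n 1) U) * four_block_mat E (0\<^sub>m 1 n) (0\<^sub>m n 1) B
      * four_block_mat (1\<^sub>m 1) (0\<^sub>m 1 n) (0\<^sub>m n 1) U = four_block_mat E (0\<^sub>m 1 n) (0\<^sub>m n 1) (cadj U * B * U)"
proof -
  have cU: "cadj (four_block_mat (1\<^sub>m 1) (0\<^sub>m 1 n) (0\<^sub>m n 1) U) =
      four_block_mat (1\<^sub>m 1) (0\<^sub>m 1 n) (0\<^sub>m n 1) (cadj U)"
    by (subst cadj_four_block_mat[of _ 1 1 _ n _ n]) (use assms in \<open>auto intro!: eq_matI\<close>)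
  have "cadj (four_block_mat (1\<^sub>m 1) (0\<^sub>m 1 n) (0\<^sub>m n 1) U) * four_block_mat E (0\<^sub>m 1 n) (0\<^sub>m n 1) B =
      four_block_mat E (0\<^sub>m 1 n) (0\<^sub>m n 1) (cadj U * B)"
    unfolding cU by (subst mult_four_block_mat[of _ 1 1 _ n _ n _ _ 1 _ n]) (use assms in auto)
  also have "\<dots> * four_block_mat (1\<^sub>m 1) (0\<^sub>m 1 n) (0\<^sub>m n 1) U =
      four_block_mat E (0\<^sub>m 1 n) (0\<^sub>m n 1) (cadj U * B * U)"
    by (subst mult_four_block_mat[of _ 1 1 _ n _ n _ _ 1 _ n]) (use assms in auto)
  finally show ?thesis .
qed

theorem hermitian_unitary_diagonalization:
  assumes "A \<in> carrier_mat n n" "cadj A = A"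
  obtains U d where "unitary_mat n U" "cadj U * A * U = real_diag n d"
  using assms
proof (induction n arbitrary: A thesis)
  case 0
  have "cadj (1\<^sub>m 0) * A * 1\<^sub>m 0 = real_diag 0 (\<lambda>_. 0)"
    using "0.prems"(2) by (auto intro!: eq_matI)
  moreover have "unitary_mat 0 (1\<^sub>m 0)" by (auto simp: unitary_mat_def intro!: eq_matI)
  ultimately show ?case using "0.prems"(1) by blast
next
  case (Suc n A)
  note A = Suc.prems(2,3)
  obtain e where "eigenvalue A e" using complex_mat_has_eigenvalue[OF A(1)] .
  then have "eigenvector A (find_eigenvector A e) e" using find_eigenvector[OF A(1)] by blast
  then obtain v where v: "v \<in> carrier_vec (Suc n)" "v \<noteq> 0\<^sub>v (Suc n)" "A *\<^sub>v v = e \<cdot>\<^sub>v v"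
    using A(1) unfolding eigenvector_def by auto
  obtain U0 c where U0: "unitary_mat (Suc n) U0" "col U0 0 = c \<cdot>\<^sub>v v"
    using unitary_mat_first_col[OF v(1,2)] .
  have "A *\<^sub>v col U0 0 = e \<cdot>\<^sub>v col U0 0"
    using A(1) v by (simp add: U0(2) mult_mat_vec smult_smult_assoc mult.commute)
  note col0 = unitary_conj_eigen_col[OF A(1) U0(1) this]
  note U0c = unitary_matD(1)[OF U0(1)]
  have herm: "cadj (cadj U0 * A * U0) = cadj U0 * A * U0"
    using cadj_conj[OF U0c A(1)] A(2) by simp
  have "cadj U0 * A * U0 \<in> carrier_mat (Suc n) (Suc n)"
    using U0c A(1) by simp
  then obtain B where B: "B \<in> carrier_mat n n" "cadj B = B"
    and blk: "cadj U0 * A * U0 = four_block_mat (mat 1 1 (\<lambda>_. complex_of_real (Re e))) (0\<^sub>m 1 n) (0\<^sub>m n 1) B"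
    using hermitian_first_col_block[OF _ herm col0] by blast
  obtain U3 d3 where U3: "unitary_mat n U3" "cadj U3 * B * U3 = real_diag n d3"
    using Suc.IH[OF _ B] by blast
  define U1 where "U1 = four_block_mat (1\<^sub>m 1) (0\<^sub>m 1 n) (0\<^sub>m n 1) U3"
  have U1: "unitary_mat (Suc n) U1" unfolding U1_def by (rule unitary_mat_four_block[OF U3(1)])
  note U1c = unitary_matD(1)[OF U1] and U3c = unitary_matD(1)[OF U3(1)]
  have "cadj (U0 * U1) * A * (U0 * U1) = cadj U1 * (cadj U0 * A * U0) * U1"
    using U0c U1c A(1) by (simp add: cadj_mult[of _ "Suc n" "Suc n" _ "Suc n"]
        assoc_mult_mat[of _ "Suc n" "Suc n" _ "Suc n" _ "Suc n"])
  also have "\<dots> = real_diag (Suc n) (case_nat (Re e) d3)"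
    unfolding blk U1_def four_block_unitary_conj[OF U3c B(1) mat_carrier] U3(2) real_diag_Suc by simp
  finally show ?case using Suc.prems(1) unitary_mat_mult[OF U0(1) U1] by blast
qed

lemma psd_mat_unitary_conj_diag_nonneg:
  assumes S: "psd_mat n S" and V: "V \<in> carrier_mat n n" and k: "k < n"
  shows "0 \<le> Re ((cadj V * S * V) $$ (k, k))"
proof -
  have Sc: "S \<in> carrier_mat n n" using S unfolding psd_mat_def by auto
  have VS: "cadj V * S \<in> carrier_mat n n" using V Sc by simp
  have "0 \<le> Re (conjugate (col V k) \<bullet> (S *\<^sub>v col V k))"
    using S V unfolding psd_mat_def by auto
  also have "conjugate (col V k) \<bullet> (S *\<^sub>v col V k) = (\<Sum>i<n. cnj (V $$ (i, k)) * (\<Sum>j<n. S $$ (i, j) * V $$ (j, k)))"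
    using V Sc k by (auto simp: scalar_prod_def lessThan_atLeast0 intro!: sum.cong)
  also have "\<dots> = (\<Sum>j<n. (\<Sum>i<n. cnj (V $$ (i, k)) * S $$ (i, j)) * V $$ (j, k))"
    by (simp add: sum_distrib_left sum_distrib_right mult.assoc) (rule sum.swap)
  also have "\<dots> = (cadj V * S * V) $$ (k, k)"
    by (subst index_mult_mat_sum[OF VS V k k], rule sum.cong[OF refl])
      (use V Sc k in \<open>simp add: index_mult_mat_sum[OF cadj_carrier_mat[OF V] Sc] del: index_mult_mat(1)\<close>)
  finally show ?thesis .
qed

lemma psd_mat_spectral:
  assumes S: "psd_mat n S"
  obtains V s where "unitary_mat n V" "S = V * real_diag n s * cadj V" "\<And>k. k < n \<Longrightarrow> 0 \<le> s k"
proof -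
  have Sc: "S \<in> carrier_mat n n" "cadj S = S" using S unfolding psd_mat_def by auto
  obtain V s where V: "unitary_mat n V" "cadj V * S * V = real_diag n s"
    using hermitian_unitary_diagonalization[OF Sc] .
  have "0 \<le> s k" if "k < n" for k
    using psd_mat_unitary_conj_diag_nonneg[OF S unitary_matD(1)[OF V(1)] that] V(2) that by simp
  then show ?thesis using that V unitary_conj_eqD[OF V(1) Sc(1) V(2)] by blast
qed

lemma unitary_conj_real_diag_mult:
  assumes V: "unitary_mat n V"
  shows "(V * real_diag n a * cadj V) * (V * real_diag n b * cadj V) = V * real_diag n (\<lambda>k. a k * b k) * cadj V"
proof -
  note Vc = unitary_matD(1)[OF V]
  have "(V * real_diag n a * cadj V) * (V * real_diag n b * cadj V) =
      V * (real_diag n a * (cadj V * (V * (real_diag n b * cadj V))))"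
    using Vc by (simp add: assoc_mult_mat[of _ n n _ n _ n])
  also have "cadj V * (V * (real_diag n b * cadj V)) = real_diag n b * cadj V"
    by (rule unitary_mat_cancel(1)[OF V, where m = n]) (use Vc in simp)
  finally show ?thesis
    using Vc by (simp add: assoc_mult_mat[of _ n n _ n _ n] real_diag_mult[symmetric])
qed

lemma psd_mat_unitary_conj_real_diag:
  assumes V: "V \<in> carrier_mat n n" and c: "\<And>k. k < n \<Longrightarrow> 0 \<le> c k"
  shows "psd_mat n (V * real_diag n c * cadj V)"
  unfolding psd_mat_def
proof (intro conjI ballI)
  let ?S = "V * real_diag n c * cadj V"
  show Sc: "?S \<in> carrier_mat n n" using V by auto
  show "cadj ?S = ?S" using cadj_conj[of "cadj V" n n "real_diag n c"] V by simp
  fix v :: "complex vec" assume v: "v \<in> carrier_vec n"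
  define w where "w k = (\<Sum>j<n. cnj (V $$ (j, k)) * v $ j)" for k
  have "conjugate v \<bullet> (?S *\<^sub>v v) = (\<Sum>i<n. cnj (v $ i) * (\<Sum>j<n. ?S $$ (i, j) * v $ j))"
    using v Sc by (auto simp: scalar_prod_def lessThan_atLeast0 intro!: sum.cong)
  also have "\<dots> = (\<Sum>i<n. \<Sum>j<n. \<Sum>k<n. cnj (v $ i) * V $$ (i, k) * complex_of_real (c k) * cnj (V $$ (j, k)) * v $ j)"
    by (rule sum.cong[OF refl])
      (simp add: index_unitary_conj_real_diag[OF V] sum_distrib_left sum_distrib_right mult.assoc)
  also have "\<dots> = (\<Sum>k<n. \<Sum>i<n. \<Sum>j<n. cnj (v $ i) * V $$ (i, k) * complex_of_real (c k) * cnj (V $$ (j, k)) * v $ j)"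
    by (subst sum.swap) (subst (2) sum.swap, rule refl)
  also have "\<dots> = (\<Sum>k<n. complex_of_real (c k) * (cnj (w k) * w k))"
    unfolding w_def by (rule sum.cong[OF refl]) (simp add: sum_distrib_left sum_distrib_right mult_ac sum_product)
  finally have "Re (conjugate v \<bullet> (?S *\<^sub>v v)) = (\<Sum>k<n. c k * (cmod (w k))\<^sup>2)"
    by (simp add: Re_sum cnj_mult_self)
  also have "\<dots> \<ge> 0" using c by (intro sum_nonneg) auto
  finally show "0 \<le> Re (conjugate v \<bullet> (?S *\<^sub>v v))" .
qed

lemma real_diag_commute_of_squares:
  assumes G: "G \<in> carrier_mat n n" and s: "\<And>k. k < n \<Longrightarrow> 0 \<le> s k" and t: "\<And>k. k < n \<Longrightarrow> 0 \<le> t k"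
    and sq: "real_diag n (\<lambda>k. s k * s k) * G = G * real_diag n (\<lambda>k. t k * t k)"
  shows "real_diag n s * G = G * real_diag n t"
proof (rule eq_matI)
  fix i j assume "i < dim_row (G * real_diag n t)" "j < dim_col (G * real_diag n t)"
  then have i: "i < n" and j: "j < n" using G by auto
  have "complex_of_real (s i * s i) * G $$ (i, j) = G $$ (i, j) * complex_of_real (t j * t j)"
    using arg_cong[OF sq, of "\<lambda>M. M $$ (i, j)"] index_mult_real_diag_left[OF G i j]
      index_mult_real_diag_right[OF G i j] by simp
  then have "G $$ (i, j) \<noteq> 0 \<Longrightarrow> s i * s i = t j * t j"
    by (metis mult.commute mult_right_cancel of_real_eq_iff)
  then have "G $$ (i, j) \<noteq> 0 \<Longrightarrow> s i = t j"
    using s[OF i] t[OF j] by (metis power2_eq_iff_nonneg power2_eq_square)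
  then have "complex_of_real (s i) * G $$ (i, j) = G $$ (i, j) * complex_of_real (t j)"
    by (cases "G $$ (i, j) = 0") (auto simp: mult.commute)
  then show "(real_diag n s * G) $$ (i, j) = (G * real_diag n t) $$ (i, j)"
    using index_mult_real_diag_left[OF G i j] index_mult_real_diag_right[OF G i j] by simp
qed (use G in auto)

text \<open>Uniqueness of the positive square root: writing both roots in eigenbases, the change
  of basis G intertwines the squared spectra, hence (by nonnegativity) the spectra themselves.\<close>

lemma psd_mat_sqrt_unique:
  assumes S: "psd_mat n S" and T: "psd_mat n T" and ST: "S * S = T * T"
  shows "S = T"
proof -
  obtain V s where V: "unitary_mat n V" and Sf: "S = V * real_diag n s * cadj V"
    and s: "\<And>k. k < n \<Longrightarrow> 0 \<le> s k"
    using psd_mat_spectral[OF S] by blast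
  obtain W t where W: "unitary_mat n W" and Tf: "T = W * real_diag n t * cadj W"
    and t: "\<And>k. k < n \<Longrightarrow> 0 \<le> t k"
    using psd_mat_spectral[OF T] by blast
  note Vc = unitary_matD[OF V] and Wc = unitary_matD[OF W]
  define G where "G = cadj V * W"
  have G: "G \<in> carrier_mat n n" unfolding G_def using Vc Wc by simp
  have "cadj V * (S * S) * W = real_diag n (\<lambda>k. s k * s k) * G"
    unfolding Sf unitary_conj_real_diag_mult[OF V] G_def
    using Vc Wc by (simp add: assoc_mult_mat[of _ n n _ n _ n] unitary_mat_cancel(1)[OF V, where m = n])
  moreover have "cadj V * (T * T) * W = G * real_diag n (\<lambda>k. t k * t k)"
    unfolding Tf unitary_conj_real_diag_mult[OF W] G_def
    using Vc Wc by (simp add: assoc_mult_mat[of _ n n _ n _ n] unitary_mat_cancel(1)[OF W, where m = n])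
  ultimately have commute: "real_diag n s * G = G * real_diag n t"
    using real_diag_commute_of_squares[OF G s t] ST by simp
  have GW: "G * cadj W = cadj V"
    unfolding G_def using Vc Wc by (simp add: assoc_mult_mat[of _ n n _ n _ n])
  have VG: "V * G = W"
    unfolding G_def using Vc Wc by (simp add: unitary_mat_cancel(2)[OF V, where m = n])
  have "S = V * real_diag n s * (G * cadj W)" unfolding GW by (rule Sf)
  also have "\<dots> = V * (real_diag n s * G) * cadj W"
    using Vc Wc G by (simp add: assoc_mult_mat[of _ n n _ n _ n])
  also have "\<dots> = (V * G) * real_diag n t * cadj W"
    unfolding commute using Vc Wc G by (simp add: assoc_mult_mat[of _ n n _ n _ n])
  also have "\<dots> = T" unfolding VG by (rule Tf[symmetric])
  finally show ?thesis .
qed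

lemma psd_mat_sqrt_exists:
  assumes P: "psd_mat n P"
  obtains S where "psd_mat n S" "S * S = P"
proof -
  obtain V d where V: "unitary_mat n V" and Pf: "P = V * real_diag n d * cadj V"
    and d: "\<And>k. k < n \<Longrightarrow> 0 \<le> d k"
    using psd_mat_spectral[OF P] by blast
  define S where "S = V * real_diag n (\<lambda>k. sqrt (d k)) * cadj V"
  have "psd_mat n S"
    unfolding S_def by (rule psd_mat_unitary_conj_real_diag[OF unitary_matD(1)[OF V]]) (simp add: d)
  moreover have "real_diag n (\<lambda>k. sqrt (d k) * sqrt (d k)) = real_diag n d"
    by (rule eq_matI) (auto simp: d)
  then have "S * S = P" unfolding S_def Pf unitary_conj_real_diag_mult[OF V] by simp
  ultimately show ?thesis using that by blast
qed

lemma cscalar_cadj_mult_self: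
  assumes X: "X \<in> carrier_mat m n" and v: "v \<in> carrier_vec n"
  shows "conjugate v \<bullet> ((cadj X * X) *\<^sub>v v) = complex_of_real (\<Sum>i<m. (cmod ((X *\<^sub>v v) $ i))\<^sup>2)"
proof -
  have "(cadj X * X) *\<^sub>v v = cadj X *\<^sub>v (X *\<^sub>v v)"
    using assoc_mult_mat_vec[OF cadj_carrier_mat[OF X] X v] .
  then have "conjugate v \<bullet> ((cadj X * X) *\<^sub>v v) = (\<Sum>j<n. cnj (v $ j) * (\<Sum>i<m. cnj (X $$ (i, j)) * (X *\<^sub>v v) $ i))"
    using X v by (auto simp: scalar_prod_def lessThan_atLeast0 intro!: sum.cong)
  also have "\<dots> = (\<Sum>i<m. cnj (\<Sum>j<n. X $$ (i, j) * v $ j) * (X *\<^sub>v v) $ i)"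
    by (simp add: sum_distrib_left sum_distrib_right mult_ac) (rule sum.swap)
  also have "\<dots> = (\<Sum>i<m. cnj ((X *\<^sub>v v) $ i) * (X *\<^sub>v v) $ i)"
    using X v by (auto simp: scalar_prod_def lessThan_atLeast0 intro!: sum.cong)
  finally show ?thesis by (simp add: cnj_mult_self)
qed

lemma psd_mat_cadj_mult_self:
  assumes X: "X \<in> carrier_mat m n"
  shows "psd_mat n (cadj X * X)"
  unfolding psd_mat_def
proof (intro conjI ballI)
  show "cadj X * X \<in> carrier_mat n n" using X by auto
  show "cadj (cadj X * X) = cadj X * X" using cadj_mult[OF cadj_carrier_mat[OF X] X] by simp
  show "0 \<le> Re (conjugate v \<bullet> (cadj X * X *\<^sub>v v))" if "v \<in> carrier_vec n" for v
    using cscalar_cadj_mult_self[OF X that] by (simp add: sum_nonneg)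
qed

lemma msqrt_psd_mat:
  assumes P: "psd_mat n P"
  shows "psd_mat n (msqrt P)" "msqrt P * msqrt P = P"
proof -
  have "dim_row P = n" using P unfolding psd_mat_def by auto
  moreover have "\<exists>!S. psd_mat n S \<and> S * S = P"
    using psd_mat_sqrt_exists[OF P] psd_mat_sqrt_unique by metis
  ultimately show "psd_mat n (msqrt P)" "msqrt P * msqrt P = P"
    using theI'[of "\<lambda>S. psd_mat n S \<and> S * S = P"] unfolding msqrt_def by auto
qed

lemma normalized_columns_orthonormal:
  fixes Y :: "nat \<Rightarrow> nat \<Rightarrow> complex" and N :: nat
  assumes orth: "\<And>a b. a < N \<Longrightarrow> b < N \<Longrightarrow> a \<noteq> b \<Longrightarrow> (\<Sum>m<N. cnj (Y m a) * Y m b) = 0"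
  defines "r \<equiv> \<lambda>k. sqrt (\<Sum>m<N. (cmod (Y m k))\<^sup>2)"
  defines "u \<equiv> \<lambda>m k. if r k = 0 then 0 else Y m k / complex_of_real (r k)"
  assumes a: "a < N" and b: "b < N"
  shows "(\<Sum>m<N. cnj (u m a) * u m b) = (if a = b \<and> r a \<noteq> 0 then 1 else 0)"
proof (cases "r a = 0 \<or> r b = 0")
  case True
  then show ?thesis unfolding u_def by auto
next
  case False
  then have ra: "r a \<noteq> 0" and rb: "r b \<noteq> 0" by auto
  have "(\<Sum>m<N. cnj (u m a) * u m b) = (\<Sum>m<N. cnj (Y m a) * Y m b) / (complex_of_real (r a) * complex_of_real (r b))"
    unfolding u_def using ra rb by (simp add: sum_divide_distrib)
  also have "\<dots> = (if a = b \<and> r a \<noteq> 0 then 1 else 0)"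
  proof (cases "a = b")
    case True
    have s: "(\<Sum>m<N. cnj (Y m a) * Y m a) = complex_of_real (\<Sum>m<N. (cmod (Y m a))\<^sup>2)"
      by (simp add: cnj_mult_self)
    have "(\<Sum>m<N. (cmod (Y m a))\<^sup>2) = r a * r a"
      unfolding r_def by (simp add: sum_nonneg)
    then have "complex_of_real (\<Sum>m<N. (cmod (Y m a))\<^sup>2) = complex_of_real (r a) * complex_of_real (r a)"
      by simp
    then show ?thesis using True s ra by simp
  next
    case False
    then show ?thesis using orth[OF a b] by simp
  qed
  finally show ?thesis .
qed

text \<open>Bessel's inequality for the rows: since u u^* is a projection, the inner products Q l of
  row m with the rows l satisfy \<Sum>l |Q l|^2 = Q m = P, the squared norm of row m; so P^2 \<le> P.\<close>

lemma orthonormal_columns_row_norm_le_1: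
  fixes u :: "nat \<Rightarrow> nat \<Rightarrow> complex" and N :: nat and p :: "nat \<Rightarrow> bool"
  assumes orthonormal: "\<And>a b. a < N \<Longrightarrow> b < N \<Longrightarrow> (\<Sum>m<N. cnj (u m a) * u m b) = (if a = b \<and> p a then 1 else 0)"
  and z: "\<And>m k. \<not> p k \<Longrightarrow> u m k = 0"
  and m: "m < N"
  shows "(\<Sum>k<N. (cmod (u m k))\<^sup>2) \<le> 1"
proof -
  define P where "P = (\<Sum>k<N. (cmod (u m k))\<^sup>2)"
  define Q where "Q l = (\<Sum>k<N. u m k * cnj (u l k))" for l
  have P0: "P \<ge> 0" unfolding P_def by (simp add: sum_nonneg)
  have Qm: "Q m = complex_of_real P"
    unfolding Q_def P_def by (simp add: mult_cnj_self)
  have "(\<Sum>l<N. Q l * cnj (Q l)) = (\<Sum>l<N. \<Sum>k<N. \<Sum>j<N. u m k * cnj (u m j) * (cnj (u l k) * u l j))"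
    unfolding Q_def by (simp add: sum_distrib_left sum_distrib_right sum_product mult_ac)
  also have "\<dots> = (\<Sum>k<N. \<Sum>j<N. \<Sum>l<N. u m k * cnj (u m j) * (cnj (u l k) * u l j))"
    by (subst sum.swap) (subst (2) sum.swap, rule refl)
  also have "\<dots> = (\<Sum>k<N. \<Sum>j<N. u m k * cnj (u m j) * (if k = j \<and> p k then 1 else 0))"
    by (intro sum.cong refl) (simp add: sum_distrib_left[symmetric] orthonormal)
  also have "\<dots> = (\<Sum>k<N. u m k * cnj (u m k))"
  proof (rule sum.cong[OF refl])
    fix k assume k: "k \<in> {..<N}"
    have "(\<Sum>j<N. u m k * cnj (u m j) * (if k = j \<and> p k then 1 else 0)) =
          (\<Sum>j<N. if j = k then (if p k then u m k * cnj (u m k) else 0) else 0)"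
      by (rule sum.cong) auto
    also have "\<dots> = u m k * cnj (u m k)" using k z by (subst sum.delta) auto
    finally show "(\<Sum>j<N. u m k * cnj (u m j) * (if k = j \<and> p k then 1 else 0)) = u m k * cnj (u m k)" .
  qed
  also have "\<dots> = complex_of_real P" unfolding P_def by (simp add: mult_cnj_self)
  finally have QQ: "(\<Sum>l<N. Q l * cnj (Q l)) = complex_of_real P" .
  have "(\<Sum>l<N. (cmod (Q l))\<^sup>2) = P"
  proof -
    have "complex_of_real (\<Sum>l<N. (cmod (Q l))\<^sup>2) = (\<Sum>l<N. Q l * cnj (Q l))"
      by (simp add: mult_cnj_self)
    then show ?thesis using QQ of_real_eq_iff by metis
  qed
  moreover have "(cmod (Q m))\<^sup>2 \<le> (\<Sum>l<N. (cmod (Q l))\<^sup>2)"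
    using m by (intro member_le_sum) auto
  moreover have "cmod (Q m) = P" using Qm P0 by simp
  ultimately have "P * P \<le> P" by (simp add: power2_eq_square)
  then have "P \<le> 1" using P0 mult_le_cancel_left2[of P P] by (cases "P = 0") auto
  then show ?thesis unfolding P_def .
qed


lemma cmod_sum_cnj_mult_le_1:
  assumes "(\<Sum>k\<in>K. (cmod (a k))\<^sup>2) \<le> 1" "(\<Sum>k\<in>K. (cmod (b k))\<^sup>2) \<le> 1"
  shows "cmod (\<Sum>k\<in>K. cnj (a k) * b k) \<le> 1"
proof -
  have "cmod (\<Sum>k\<in>K. cnj (a k) * b k) \<le> (\<Sum>k\<in>K. cmod (a k) * cmod (b k))"
    by (rule order_trans[OF norm_sum]) (simp add: norm_mult)
  also have "\<dots> \<le> (\<Sum>k\<in>K. ((cmod (a k))\<^sup>2 + (cmod (b k))\<^sup>2) / 2)"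
  proof (rule sum_mono)
    fix k
    have "0 \<le> (cmod (a k) - cmod (b k))\<^sup>2" by simp
    then show "cmod (a k) * cmod (b k) \<le> ((cmod (a k))\<^sup>2 + (cmod (b k))\<^sup>2) / 2"
      by (simp add: power2_diff)
  qed
  also have "\<dots> = ((\<Sum>k\<in>K. (cmod (a k))\<^sup>2) + (\<Sum>k\<in>K. (cmod (b k))\<^sup>2)) / 2"
    by (simp only: sum.distrib[symmetric] sum_divide_distrib[symmetric])
  also have "\<dots> \<le> 1" using assms by simp
  finally show ?thesis .
qed

lemma sum_orthogonal_column_norms_le:
  fixes X V :: "nat \<Rightarrow> nat \<Rightarrow> complex" and N :: nat
  defines "Y \<equiv> \<lambda>m k. \<Sum>j<N. X m j * V j k"
  assumes rows: "\<And>j. j < N \<Longrightarrow> (\<Sum>k<N. (cmod (V j k))\<^sup>2) = 1"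
    and orth: "\<And>a b. a < N \<Longrightarrow> b < N \<Longrightarrow> a \<noteq> b \<Longrightarrow> (\<Sum>m<N. cnj (Y m a) * Y m b) = 0"
  shows "(\<Sum>k<N. sqrt (\<Sum>m<N. (cmod (Y m k))\<^sup>2)) \<le> (\<Sum>m<N. \<Sum>j<N. cmod (X m j))"
proof -
  define r where "r = (\<lambda>k. sqrt (\<Sum>m<N. (cmod (Y m k))\<^sup>2))"
  define u where "u = (\<lambda>m k. if r k = 0 then 0 else Y m k / complex_of_real (r k))"
  have "(\<Sum>m<N. cnj (u m a) * u m b) = (if a = b \<and> r a \<noteq> 0 then 1 else 0)" if "a < N" "b < N" for a b
    using normalized_columns_orthonormal[of N Y a b, OF orth] that unfolding u_def r_def by blast
  then have u_rows: "(\<Sum>k<N. (cmod (u m k))\<^sup>2) \<le> 1" if "m < N" for m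
    by (rule orthonormal_columns_row_norm_le_1[of N u "\<lambda>k. r k \<noteq> 0"]) (auto simp: u_def that)
  have r_eq: "complex_of_real (r k) = (\<Sum>m<N. cnj (u m k) * Y m k)" for k
  proof (cases "r k = 0")
    case False
    have "(\<Sum>m<N. cnj (Y m k) * Y m k) = complex_of_real (r k * r k)"
      unfolding r_def by (simp add: cnj_mult_self sum_nonneg)
    then show ?thesis using False by (simp add: u_def sum_divide_distrib[symmetric])
  qed (simp add: u_def)
  define c where "c m j = (\<Sum>k<N. cnj (u m k) * V j k)" for m j
  have "complex_of_real (\<Sum>k<N. r k) = (\<Sum>k<N. \<Sum>m<N. \<Sum>j<N. cnj (u m k) * (X m j * V j k))"
    by (simp add: r_eq Y_def sum_distrib_left)
  also have "\<dots> = (\<Sum>m<N. \<Sum>j<N. \<Sum>k<N. cnj (u m k) * (X m j * V j k))"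
    by (subst sum.swap) (subst (2) sum.swap, rule refl)
  also have "\<dots> = (\<Sum>m<N. \<Sum>j<N. X m j * c m j)"
    unfolding c_def by (simp add: sum_distrib_left mult_ac)
  finally have "(\<Sum>k<N. r k) = Re (\<Sum>m<N. \<Sum>j<N. X m j * c m j)"
    by (metis Re_complex_of_real)
  also have "\<dots> \<le> (\<Sum>m<N. \<Sum>j<N. cmod (X m j * c m j))"
    by (rule order_trans[OF complex_Re_le_cmod], rule order_trans[OF norm_sum]) (intro sum_mono norm_sum)
  also have "\<dots> \<le> (\<Sum>m<N. \<Sum>j<N. cmod (X m j))"
  proof (intro sum_mono)
    fix m j assume "m \<in> {..<N}" "j \<in> {..<N}"
    then have "cmod (c m j) \<le> 1" unfolding c_def
      by (intro cmod_sum_cnj_mult_le_1) (simp_all add: u_rows rows)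
    then show "cmod (X m j * c m j) \<le> cmod (X m j)" by (simp add: norm_mult mult_left_le)
  qed
  finally show ?thesis unfolding r_def .
qed

lemma unitary_mat_row_norm:
  assumes V: "unitary_mat n V" and j: "j < n"
  shows "(\<Sum>k<n. (cmod (V $$ (j, k)))\<^sup>2) = 1"
proof -
  note Vc = unitary_matD[OF V]
  have "complex_of_real (\<Sum>k<n. (cmod (V $$ (j, k)))\<^sup>2) = (V * cadj V) $$ (j, j)"
    by (subst index_mult_mat_sum[OF Vc(1) cadj_carrier_mat[OF Vc(1)] j j])
      (use Vc(1) j in \<open>simp add: mult_cnj_self\<close>)
  then show ?thesis using Vc(3) j by (metis index_one_mat(1) of_real_eq_1_iff)
qed

lemma unitary_mat_col_norm:
  assumes V: "unitary_mat n V" and k: "k < n"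
  shows "(\<Sum>i<n. (cmod (V $$ (i, k)))\<^sup>2) = 1"
proof -
  note Vc = unitary_matD[OF V]
  have "complex_of_real (\<Sum>i<n. (cmod (V $$ (i, k)))\<^sup>2) = (cadj V * V) $$ (k, k)"
    by (subst index_mult_mat_sum[OF cadj_carrier_mat[OF Vc(1)] Vc(1) k k])
      (use Vc(1) k in \<open>simp add: cnj_mult_self\<close>)
  then show ?thesis using Vc(2) k by (metis index_one_mat(1) of_real_eq_1_iff)
qed

lemma ctrace_unitary_conj_real_diag:
  assumes V: "unitary_mat n V"
  shows "ctrace (V * real_diag n s * cadj V) = complex_of_real (\<Sum>k<n. s k)"
proof -
  note Vc = unitary_matD(1)[OF V]
  have "ctrace (V * real_diag n s * cadj V) = (\<Sum>i<n. \<Sum>k<n. V $$ (i, k) * complex_of_real (s k) * cnj (V $$ (i, k)))"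
    unfolding ctrace_def using Vc by (simp add: index_unitary_conj_real_diag[OF Vc] del: index_mult_mat(1))
  also have "\<dots> = (\<Sum>k<n. complex_of_real (s k) * (\<Sum>i<n. V $$ (i, k) * cnj (V $$ (i, k))))"
    by (subst sum.swap) (simp add: sum_distrib_left mult_ac)
  also have "\<dots> = (\<Sum>k<n. complex_of_real (s k))"
  proof (rule sum.cong[OF refl])
    fix k assume "k \<in> {..<n}"
    have "(\<Sum>i<n. V $$ (i, k) * cnj (V $$ (i, k))) = complex_of_real (\<Sum>i<n. (cmod (V $$ (i, k)))\<^sup>2)"
      by (simp add: mult_cnj_self)
    also have "\<dots> = 1" using unitary_mat_col_norm[OF V] \<open>k \<in> {..<n}\<close> by simp
    finally show "complex_of_real (s k) * (\<Sum>i<n. V $$ (i, k) * cnj (V $$ (i, k))) = complex_of_real (s k)"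
      by simp
  qed
  finally show ?thesis by simp
qed

lemma trace_norm_column_norms:
  assumes X: "X \<in> carrier_mat n n"
  obtains V where "unitary_mat n V"
    "\<And>a b. a < n \<Longrightarrow> b < n \<Longrightarrow> a \<noteq> b \<Longrightarrow> (\<Sum>m<n. cnj ((X * V) $$ (m, a)) * (X * V) $$ (m, b)) = 0"
    "trace_norm X = (\<Sum>k<n. sqrt (\<Sum>m<n. (cmod ((X * V) $$ (m, k)))\<^sup>2))"
proof -
  let ?S = "msqrt (cadj X * X)"
  have P: "psd_mat n (cadj X * X)" by (rule psd_mat_cadj_mult_self[OF X])
  obtain V s where V: "unitary_mat n V" and Sf: "?S = V * real_diag n s * cadj V"
    and s: "\<And>k. k < n \<Longrightarrow> 0 \<le> s k"
    using psd_mat_spectral[OF msqrt_psd_mat(1)[OF P]] by blast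
  note Vc = unitary_matD[OF V]
  define Y where "Y = X * V"
  have Y: "Y \<in> carrier_mat n n" unfolding Y_def using X Vc by simp
  have "cadj Y * Y = cadj V * (cadj X * X) * V"
    using X Vc by (simp add: Y_def cadj_mult[OF X Vc(1)] assoc_mult_mat[of _ n n _ n _ n])
  also have "cadj X * X = V * real_diag n (\<lambda>k. s k * s k) * cadj V"
    using msqrt_psd_mat(2)[OF P] unfolding Sf unitary_conj_real_diag_mult[OF V] by simp
  also have "cadj V * (V * real_diag n (\<lambda>k. s k * s k) * cadj V) * V = real_diag n (\<lambda>k. s k * s k)"
    by (rule unitary_conj_inverse[OF V real_diag_carrier])
  finally have YY: "cadj Y * Y = real_diag n (\<lambda>k. s k * s k)" .
  have entry: "(cadj Y * Y) $$ (a, b) = (\<Sum>m<n. cnj (Y $$ (m, a)) * Y $$ (m, b))" if "a < n" "b < n" for a b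
    using index_mult_mat_sum[OF cadj_carrier_mat[OF Y] Y that] Y that by simp
  have "s k = sqrt (\<Sum>m<n. (cmod (Y $$ (m, k)))\<^sup>2)" if k: "k < n" for k
  proof -
    have "complex_of_real (s k * s k) = complex_of_real (\<Sum>m<n. (cmod (Y $$ (m, k)))\<^sup>2)"
      using entry[OF k k] YY k by (simp add: cnj_mult_self)
    then have "s k * s k = (\<Sum>m<n. (cmod (Y $$ (m, k)))\<^sup>2)" using of_real_eq_iff by blast
    moreover have "sqrt (s k * s k) = s k" using s[OF k] by simp
    ultimately show ?thesis by simp
  qed
  moreover have "trace_norm X = (\<Sum>k<n. s k)"
    unfolding trace_norm_def Sf ctrace_unitary_conj_real_diag[OF V] by simp
  moreover have "(\<Sum>m<n. cnj (Y $$ (m, a)) * Y $$ (m, b)) = 0" if "a < n" "b < n" "a \<noteq> b" for a b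
    using entry[of a b] YY that by simp
  ultimately show ?thesis using that[OF V] unfolding Y_def by simp
qed

lemma trace_norm_le_entrywise_l1:
  assumes X: "X \<in> carrier_mat n n"
  shows "trace_norm X \<le> (\<Sum>m<n. \<Sum>j<n. cmod (X $$ (m, j)))"
proof -
  obtain V where V: "unitary_mat n V"
    and orth: "\<And>a b. a < n \<Longrightarrow> b < n \<Longrightarrow> a \<noteq> b \<Longrightarrow> (\<Sum>m<n. cnj ((X * V) $$ (m, a)) * (X * V) $$ (m, b)) = 0"
    and tn: "trace_norm X = (\<Sum>k<n. sqrt (\<Sum>m<n. (cmod ((X * V) $$ (m, k)))\<^sup>2))"
    using trace_norm_column_norms[OF X] by blast
  have XV: "(X * V) $$ (m, k) = (\<Sum>j<n. X $$ (m, j) * V $$ (j, k))" if "m < n" "k < n" for m k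
    using index_mult_mat_sum[OF X unitary_matD(1)[OF V] that] .
  show ?thesis unfolding tn
    using sum_orthogonal_column_norms_le[of n "\<lambda>j k. V $$ (j, k)" "\<lambda>m j. X $$ (m, j)"]
      unitary_mat_row_norm[OF V] orth by (simp add: XV)
qed

lemma sum_lessThan_mult:
  fixes f :: "nat \<Rightarrow> 'a::comm_monoid_add"
  shows "(\<Sum>k<a * b. f k) = (\<Sum>i<a. \<Sum>m<b. f (i * b + m))"
proof -
  have "(\<Sum>k<a * b. f k) = (\<Sum>i<a. sum f {i * b..<i * b + b})"
    using sum.nat_group[of f b a] by (simp add: mult.commute)
  also have "\<dots> = (\<Sum>i<a. \<Sum>m<b. f (i * b + m))"
  proof (rule sum.cong[OF refl])
    fix i
    have "sum f {0 + i * b..<b + i * b} = sum (\<lambda>m. f (m + i * b)) {0..<b}"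
      by (rule sum.shift_bounds_nat_ivl)
    then show "sum f {i * b..<i * b + b} = (\<Sum>m<b. f (i * b + m))"
      by (simp add: add.commute lessThan_atLeast0)
  qed
  finally show ?thesis .
qed

lemma block_index_eq_iff:
  fixes dB :: nat
  assumes "m < dB" "n < dB"
  shows "i * dB + m = j * dB + n \<longleftrightarrow> i = j \<and> m = n"
proof
  assume "i * dB + m = j * dB + n"
  then have "(i * dB + m) div dB = (j * dB + n) div dB" "(i * dB + m) mod dB = (j * dB + n) mod dB"
    by simp_all
  then show "i = j \<and> m = n" using assms by simp
qed simp

lemma sum_sum_split_diagonal:
  fixes F :: "'i \<Rightarrow> 'i \<Rightarrow> 'a::comm_monoid_add"
  assumes "finite A"
  shows "(\<Sum>i\<in>A. \<Sum>j\<in>A. F i j) = (\<Sum>i\<in>A. \<Sum>j\<in>A. if i \<noteq> j then F i j else 0) + (\<Sum>i\<in>A. F i i)"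
proof -
  have "(\<Sum>j\<in>A. F i j) = (\<Sum>j\<in>A. if i \<noteq> j then F i j else 0) + F i i" if "i \<in> A" for i
  proof -
    have "(\<Sum>j\<in>A. F i j) = (\<Sum>j\<in>A. (if i \<noteq> j then F i j else 0) + (if i = j then F i j else 0))"
      by (rule sum.cong) auto
    then show ?thesis using assms that by (simp add: sum.distrib)
  qed
  then show ?thesis by (simp add: sum.distrib)
qed

lemma block_B_carrier [simp]: "block_B dB \<rho> i j \<in> carrier_mat dB dB"
  by (simp add: block_B_def)

lemma C_l1_blocks:
  assumes "\<rho> \<in> carrier_mat (dA * dB) (dA * dB)"
  shows "C_l1 \<rho> = (\<Sum>i<dA. \<Sum>j<dA. if i \<noteq> j then \<Sum>m<dB. \<Sum>n<dB. cmod (block_B dB \<rho> i j $$ (m, n)) else 0)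
    + (\<Sum>i<dA. C_l1 (block_B dB \<rho> i i))"
proof -
  define F where "F i j = (\<Sum>m<dB. \<Sum>n<dB. if i \<noteq> j \<or> m \<noteq> n then cmod (block_B dB \<rho> i j $$ (m, n)) else 0)" for i j
  have "C_l1 \<rho> = (\<Sum>i<dA. \<Sum>m<dB. \<Sum>j<dA. \<Sum>n<dB.
      if i * dB + m \<noteq> j * dB + n then cmod (\<rho> $$ (i * dB + m, j * dB + n)) else 0)"
    using assms by (simp add: C_l1_def sum_lessThan_mult)
  also have "\<dots> = (\<Sum>i<dA. \<Sum>m<dB. \<Sum>j<dA. \<Sum>n<dB.
      if i \<noteq> j \<or> m \<noteq> n then cmod (block_B dB \<rho> i j $$ (m, n)) else 0)"
    by (intro sum.cong refl) (auto simp: block_index_eq_iff block_B_def)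
  also have "\<dots> = (\<Sum>i<dA. \<Sum>j<dA. F i j)"
    unfolding F_def by (rule sum.cong[OF refl]) (rule sum.swap)
  also have "\<dots> = (\<Sum>i<dA. \<Sum>j<dA. if i \<noteq> j then F i j else 0) + (\<Sum>i<dA. F i i)"
    by (rule sum_sum_split_diagonal) simp
  finally show ?thesis by (simp add: F_def C_l1_def carrier_matD[OF block_B_carrier] cong: if_cong)
qed

lemma C_l1_IQ_le_blocks:
  "C_l1_IQ dA dB \<rho> \<le> (\<Sum>i<dA. \<Sum>j<dA. if i \<noteq> j then \<Sum>m<dB. \<Sum>n<dB. cmod (block_B dB \<rho> i j $$ (m, n)) else 0)"
  unfolding C_l1_IQ_def
proof (intro sum_mono)
  fix i j
  from trace_norm_le_entrywise_l1[OF block_B_carrier]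
  show "(if i \<noteq> j then trace_norm (block_B dB \<rho> i j) else 0) \<le>
      (if i \<noteq> j then \<Sum>m<dB. \<Sum>n<dB. cmod (block_B dB \<rho> i j $$ (m, n)) else 0)"
    by simp
qed

lemma C_l1_ptrace_A_le_blocks:
  "C_l1 (ptrace_A dA dB \<rho>) \<le> (\<Sum>i<dA. C_l1 (block_B dB \<rho> i i))"
proof -
  have "C_l1 (ptrace_A dA dB \<rho>) =
      (\<Sum>m<dB. \<Sum>n<dB. if m \<noteq> n then cmod (\<Sum>i<dA. \<rho> $$ (i * dB + m, i * dB + n)) else 0)"
    unfolding C_l1_def ptrace_A_def by (intro sum.cong refl) auto
  also have "\<dots> \<le> (\<Sum>m<dB. \<Sum>n<dB. \<Sum>i<dA. if m \<noteq> n then cmod (\<rho> $$ (i * dB + m, i * dB + n)) else 0)"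
    by (intro sum_mono) (auto intro: norm_sum)
  also have "\<dots> = (\<Sum>m<dB. \<Sum>i<dA. \<Sum>n<dB. if m \<noteq> n then cmod (\<rho> $$ (i * dB + m, i * dB + n)) else 0)"
    by (rule sum.cong[OF refl]) (rule sum.swap)
  also have "\<dots> = (\<Sum>i<dA. \<Sum>m<dB. \<Sum>n<dB. if m \<noteq> n then cmod (\<rho> $$ (i * dB + m, i * dB + n)) else 0)"
    by (rule sum.swap)
  also have "\<dots> = (\<Sum>i<dA. C_l1 (block_B dB \<rho> i i))"
    unfolding C_l1_def block_B_def by (intro sum.cong refl) auto
  finally show ?thesis .
qed

theorem proposition5:
  fixes dA dB :: nat and \<rho> :: "complex mat"
  assumes "dA \<ge> 1" and "dB \<ge> 1"
    and "density_mat (dA * dB) \<rho>"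
  shows "C_l1 \<rho> \<ge> C_l1_IQ dA dB \<rho> + C_l1 (ptrace_A dA dB \<rho>)"
proof -
  have "\<rho> \<in> carrier_mat (dA * dB) (dA * dB)"
    using assms(3) unfolding density_mat_def psd_mat_def by auto
  from C_l1_blocks[OF this] show ?thesis
    using C_l1_IQ_le_blocks[of dA dB \<rho>] C_l1_ptrace_A_le_blocks[of dA dB \<rho>] by linarith
qed

end
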